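(* Let $p$ be a prime, $q$ a power of $p$, and $F$ a field of characteristic $p$ containing $\mathbb{F}_q$. Let $L\in F[x]$ be a monic $q$-polynomial of $q$-degree $n$ such that: (1) $L(x)/x$ is irreducible over $F$; (2) $L$ is not a $q^s$-polynomial for any integer $s>1$; (3) $L=x^{q^n}+a_{n-k}x^{q^{n-k}}+\cdots+a_0x$ with $1\leq k\leq n$ and $a_{n-k}\neq0$. Let $V$ be the space of roots of $L$ in a splitting field $E$ of $L$ over $F$, and let $\alpha,\beta\in V$ be linearly independent over $\mathbb{F}_q$. If $d$ is a positive integer such that $\alpha^d,\alpha^{d-1}\beta,\dots,\beta^d$ are linearly dependent over $F$, then $d\geq q^k+1$.
   Context: A $q$-polynomial of $q$-degree $n$ is $\sum_{i=0}^n a_ix^{q^i}$ with $a_n\neq0$; it is a $q^s$-polynomial if only exponents $q^j$ with $s\mid j$ occur. *)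

theory Defs
  imports "HOL-Computational_Algebra.Polynomial"
begin

definition field_hom :: "('f::field \<Rightarrow> 'e::field) \<Rightarrow> bool" where
  "field_hom \<phi> \<longleftrightarrow> \<phi> 1 = 1 \<and> (\<forall>a b. \<phi> (a + b) = \<phi> a + \<phi> b) \<and> (\<forall>a b. \<phi> (a * b) = \<phi> a * \<phi> b)"

definition is_subfield :: "'e::field set \<Rightarrow> bool" where
  "is_subfield S \<longleftrightarrow> 0 \<in> S \<and> 1 \<in> S \<and> (\<forall>a\<in>S. \<forall>b\<in>S. a + b \<in> S \<and> a * b \<in> S)
     \<and> (\<forall>a\<in>S. - a \<in> S \<and> inverse a \<in> S)"

text \<open>E (the type 'e) is a splitting field of L over F, where F embeds into E via phi:
  the image of L splits into linear factors over E, and E is generated as a field by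
  phi(F) together with the roots of L.\<close>
definition is_splitting_field :: "('f::field \<Rightarrow> 'e::field) \<Rightarrow> 'f poly \<Rightarrow> bool" where
  "is_splitting_field \<phi> L \<longleftrightarrow> field_hom \<phi> \<and>
     (\<exists>c rs. map_poly \<phi> L = smult c (prod_list (map (\<lambda>r. [:- r, 1:]) rs))) \<and>
     (\<forall>S. is_subfield S \<and> range \<phi> \<subseteq> S \<and> {x. poly (map_poly \<phi> L) x = 0} \<subseteq> S \<longrightarrow> S = UNIV)"

definition is_q_poly :: "nat \<Rightarrow> 'f::field poly \<Rightarrow> bool" where
  "is_q_poly q L \<longleftrightarrow> (\<forall>j. coeff L j \<noteq> 0 \<longrightarrow> (\<exists>i. j = q ^ i))"

definition is_qs_poly :: "nat \<Rightarrow> nat \<Rightarrow> 'f::field poly \<Rightarrow> bool" where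
  "is_qs_poly q s L \<longleftrightarrow> (\<forall>j. coeff L j \<noteq> 0 \<longrightarrow> (\<exists>i. s dvd i \<and> j = q ^ i))"

end

(*
  Put \<gamma> = \<beta>/\<alpha>. A dependence relation of degree d between the monomials in \<alpha>, \<beta> gives
  a nonzero f \<in> F[x] of degree at most d with f(\<gamma>) = 0, and f can be chosen without roots in
  F_q, because \<gamma> \<notin> F_q by the linear independence of \<alpha> and \<beta>. Since L(x)/x is irreducible,
  every nonzero root u of L is conjugate to \<alpha> over F, so the common root \<beta> of L(y) and of
  \<alpha>^(deg f) f(y/\<alpha>) is transported to a root r of f with r u again a root of L.
  For r \<notin> F_q the polynomial L(r x) - r^(q^n) L(x) is nonzero (L is not a q^s-polynomial) and has
  degree at most q^(n-k) by the gap in the coefficients of L, so fewer than q^(n-k) nonzero roots u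
  satisfy L(r u) = 0. Counting the q^n - 1 nonzero roots of the separable polynomial L gives
  q^n - 1 \<le> d (q^(n-k) - 1), hence d \<ge> q^k + 1.
*)
theory Submission
  imports Defs "Subresultants.More_Homomorphisms"
begin

section \<open>Polynomials over a subfield\<close>

definition poly_over :: "'a::zero set \<Rightarrow> 'a poly \<Rightarrow> bool" where
  "poly_over K p \<longleftrightarrow> (\<forall>i. coeff p i \<in> K)"

definition bezout_divisor :: "'a::comm_ring_1 set \<Rightarrow> 'a poly \<Rightarrow> 'a poly \<Rightarrow> 'a poly \<Rightarrow> bool" where
  "bezout_divisor K A B D \<longleftrightarrow> D dvd A \<and> D dvd B \<and>
     (\<exists>S T. poly_over K S \<and> poly_over K T \<and> S * A + T * B = D)"

lemma bezout_divisor_swap: "bezout_divisor K A B D \<longleftrightarrow> bezout_divisor K B A D"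
  unfolding bezout_divisor_def by (metis add.commute)

context
  fixes K :: "'a::field set"
  assumes K: "is_subfield K"
begin

lemma subfield_closed:
  "0 \<in> K" "1 \<in> K" "x \<in> K \<Longrightarrow> y \<in> K \<Longrightarrow> x + y \<in> K" "x \<in> K \<Longrightarrow> y \<in> K \<Longrightarrow> x * y \<in> K"
  "x \<in> K \<Longrightarrow> - x \<in> K" "x \<in> K \<Longrightarrow> inverse x \<in> K"
  using K by (auto simp: is_subfield_def)

lemma sum_in_subfield: "(\<And>i. i \<in> A \<Longrightarrow> f i \<in> K) \<Longrightarrow> sum f A \<in> K"
  by (induction A rule: infinite_finite_induct) (auto intro: subfield_closed)

lemma poly_over_0: "poly_over K 0"
  and poly_over_1: "poly_over K 1"
  and poly_over_monom: "c \<in> K \<Longrightarrow> poly_over K (monom c n)"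
  by (auto simp: poly_over_def coeff_1 coeff_monom subfield_closed)

lemma poly_over_diff: "poly_over K p \<Longrightarrow> poly_over K q \<Longrightarrow> poly_over K (p - q)"
  unfolding poly_over_def coeff_diff unfolding diff_conv_add_uminus by (blast intro: subfield_closed)

lemma poly_over_mult: "poly_over K p \<Longrightarrow> poly_over K q \<Longrightarrow> poly_over K (p * q)"
  unfolding poly_over_def coeff_mult by (auto intro!: sum_in_subfield subfield_closed)

lemma poly_over_smult: "c \<in> K \<Longrightarrow> poly_over K p \<Longrightarrow> poly_over K (Polynomial.smult c p)"
  unfolding poly_over_def by (auto intro: subfield_closed)

lemma bezout_divisor_0: "bezout_divisor K X 0 X"
  using poly_over_0 poly_over_1 by (fastforce simp: bezout_divisor_def)

lemma bezout_divisor_reduce: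
  assumes "poly_over K m" "bezout_divisor K (A - m * B) B D"
  shows "bezout_divisor K A B D"
proof -
  obtain S T where ST: "poly_over K S" "poly_over K T" "S * (A - m * B) + T * B = D"
    and dvd: "D dvd A - m * B" "D dvd B"
    using assms(2) by (auto simp: bezout_divisor_def)
  have "S * A + (T - S * m) * B = D"
    using ST(3) by (simp add: algebra_simps)
  moreover have "poly_over K (T - S * m)"
    using ST assms(1) by (intro poly_over_diff poly_over_mult)
  moreover have "D dvd A"
    using dvd by (metis diff_add_cancel dvd_add dvd_mult)
  ultimately show ?thesis
    using ST(1) dvd(2) unfolding bezout_divisor_def by blast
qed

lemma cancel_leading_term_over:
  assumes "poly_over K A" "poly_over K B" "A \<noteq> 0" "B \<noteq> 0" "degree B \<le> degree A"
  obtains m where "poly_over K m" "length (coeffs (A - m * B)) < length (coeffs A)"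
proof -
  define m where "m = monom (lead_coeff A / lead_coeff B) (degree A - degree B)"
  have m: "poly_over K m"
    using assms unfolding m_def
    by (intro poly_over_monom) (auto simp: poly_over_def divide_inverse subfield_closed)
  have "coeff (A - m * B) j = 0" if "degree A \<le> j" for j
    using that assms
    by (cases "j = degree A") (auto simp: m_def coeff_monom_mult coeff_eq_0)
  then have "A - m * B = 0 \<or> degree (A - m * B) < degree A"
    by (metis leading_coeff_0_iff not_le)
  then have "length (coeffs (A - m * B)) < length (coeffs A)"
    using assms by (cases "A - m * B = 0") (auto simp: length_coeffs_degree)
  with m show ?thesis
    by (rule that)
qed

lemma bezout_one_if_unit_divisor:
  assumes "poly_over K D" "bezout_divisor K A B D" "is_unit D"
  shows "\<exists>S T. poly_over K S \<and> poly_over K T \<and> S * A + T * B = 1"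
proof -
  obtain S T where ST: "poly_over K S" "poly_over K T" "S * A + T * B = D"
    using assms(2) by (auto simp: bezout_divisor_def)
  obtain d where d: "D = [:d:]" "d dvd 1"
    using assms(3) is_unit_poly_iff by blast
  then have "d \<noteq> 0"
    by (metis dvd_0_left_iff zero_neq_one)
  have "d \<in> K"
    using assms(1) d(1) unfolding poly_over_def by (metis coeff_pCons_0)
  then have over: "poly_over K (Polynomial.smult (inverse d) S)"
      "poly_over K (Polynomial.smult (inverse d) T)"
    using ST(1,2) by (simp_all add: poly_over_smult subfield_closed(6))
  have "Polynomial.smult (inverse d) S * A + Polynomial.smult (inverse d) T * B
      = Polynomial.smult (inverse d) (S * A + T * B)"
    by (simp add: smult_add_right)
  also have "\<dots> = 1"
    using ST(3) d(1) \<open>d \<noteq> 0\<close> by simp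
  finally show ?thesis
    using over by blast
qed

lemma bezout_divisor_exists:
  assumes "poly_over K A" "poly_over K B"
  shows "\<exists>D. poly_over K D \<and> bezout_divisor K A B D"
  using assms
proof (induction "length (coeffs A) + length (coeffs B)" arbitrary: A B rule: less_induct)
  case (less A B)
  have reduce: "\<exists>D. poly_over K D \<and> bezout_divisor K X Y D"
    if XY: "poly_over K X" "poly_over K Y" "X \<noteq> 0" "Y \<noteq> 0" "degree Y \<le> degree X"
      and len: "length (coeffs X) + length (coeffs Y) = length (coeffs A) + length (coeffs B)" for X Y
  proof -
    obtain m where m: "poly_over K m" "length (coeffs (X - m * Y)) < length (coeffs X)"
      using cancel_leading_term_over[OF XY] .
    have "poly_over K (X - m * Y)"
      using m XY by (intro poly_over_diff poly_over_mult)
    then obtain D where "poly_over K D" "bezout_divisor K (X - m * Y) Y D"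
      using less.hyps[of "X - m * Y" Y] m(2) len XY(2) by auto
    then show ?thesis
      using bezout_divisor_reduce m(1) by blast
  qed
  consider "A = 0" | "B = 0" | "A \<noteq> 0" "B \<noteq> 0" "degree B \<le> degree A"
    | "A \<noteq> 0" "B \<noteq> 0" "degree A \<le> degree B"
    by linarith
  then show ?case
  proof cases
    case 1
    then show ?thesis using bezout_divisor_0 bezout_divisor_swap less.prems by blast
  next
    case 2
    then show ?thesis using bezout_divisor_0 less.prems by blast
  next
    case 3
    then show ?thesis using reduce less.prems by blast
  next
    case 4
    then have "\<exists>D. poly_over K D \<and> bezout_divisor K B A D"
      using reduce[of B A] less.prems by (simp add: add.commute)
    then show ?thesis using bezout_divisor_swap by blast
  qed
qed

end

lemma is_subfield_UNIV: "is_subfield (UNIV :: 'a::field set)"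
  by (simp add: is_subfield_def)

lemma poly_over_UNIV [simp]: "poly_over UNIV p"
  by (simp add: poly_over_def)

lemma bezout_one_irreducible:
  fixes g h :: "'a::field poly"
  assumes "irreducible g" "\<not> g dvd h"
  shows "\<exists>s t. s * g + t * h = 1"
proof -
  obtain D where D: "bezout_divisor UNIV g h D"
    using bezout_divisor_exists[OF is_subfield_UNIV poly_over_UNIV poly_over_UNIV] by blast
  then obtain k where k: "g = D * k"
    by (auto simp: bezout_divisor_def elim: dvdE)
  have "\<not> is_unit k"
  proof
    assume "is_unit k"
    then have "g dvd D"
      unfolding k by (simp add: mult_unit_dvd_iff)
    moreover have "D dvd h"
      using D by (simp add: bezout_divisor_def)
    ultimately show False
      using assms(2) dvd_trans by blast
  qed
  then have "is_unit D"
    using irreducibleD[OF assms(1) k] by blast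
  then show ?thesis
    using bezout_one_if_unit_divisor[OF is_subfield_UNIV poly_over_UNIV D] by simp
qed

lemma root_of_nonunit_dvd_prod_linear:
  fixes D :: "'a::field poly"
  assumes "D dvd prod_list (map (\<lambda>r. [:-r, 1:]) rs)" "\<not> is_unit D"
  shows "\<exists>y. poly D y = 0"
  using assms(1)
proof (induction rs)
  case Nil
  then show ?case using assms(2) by simp
next
  case (Cons r rs)
  show ?case
  proof (cases "poly D r = 0")
    case False
    then have "\<not> [:-r, 1:] dvd D"
      by (simp add: poly_eq_0_iff_dvd)
    moreover have "irreducible [:-r, 1:]"
      by (rule irreducible_linear_field_poly) simp
    ultimately obtain s t where st: "s * [:-r, 1:] + t * D = 1"
      using bezout_one_irreducible by blast
    define P where "P = prod_list (map (\<lambda>r. [:-r, 1:]) rs)"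
    have "D dvd s * ([:-r, 1:] * P) + t * D * P"
      using Cons.prems by (simp add: P_def)
    also have "s * ([:-r, 1:] * P) + t * D * P = (s * [:-r, 1:] + t * D) * P"
      by (simp only: distrib_right mult.assoc)
    finally have "D dvd P"
      using st by simp
    then show ?thesis
      using Cons.IH unfolding P_def by blast
  qed blast
qed

lemma bezout_one_over_subfield:
  assumes K: "is_subfield K" and AB: "poly_over K A" "poly_over K B"
    and split: "B = Polynomial.smult c (prod_list (map (\<lambda>r. [:-r, 1:]) rs))" "B \<noteq> 0"
    and coprime: "\<And>z. poly A z = 0 \<Longrightarrow> poly B z \<noteq> 0"
  shows "\<exists>S T. poly_over K S \<and> poly_over K T \<and> S * A + T * B = 1"
proof -
  obtain D where D: "poly_over K D" "bezout_divisor K A B D"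
    using bezout_divisor_exists[OF K AB] by blast
  have "is_unit D"
  proof (rule ccontr)
    assume "\<not> is_unit D"
    have "D dvd prod_list (map (\<lambda>r. [:-r, 1:]) rs)"
      using D split by (auto simp: bezout_divisor_def dvd_smult_iff)
    then obtain z where "poly D z = 0"
      using root_of_nonunit_dvd_prod_linear \<open>\<not> is_unit D\<close> by blast
    then have "poly A z = 0" "poly B z = 0"
      using D(2) by (auto simp: bezout_divisor_def elim!: dvdE)
    then show False
      using coprime by blast
  qed
  then show ?thesis
    using bezout_one_if_unit_divisor[OF K D] by blast
qed

section \<open>Evaluation at roots of an irreducible polynomial\<close>

lemma field_hom_if_splitting_field:
  assumes "is_splitting_field \<phi> L"
  shows "Ring_Hom.field_hom \<phi>"
proof -
  have "\<phi> (a + b) = \<phi> a + \<phi> b" "\<phi> (a * b) = \<phi> a * \<phi> b" "\<phi> 1 = 1" for a b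
    using assms by (auto simp: is_splitting_field_def Defs.field_hom_def)
  moreover from this have "\<phi> 0 = 0"
    by (metis add_cancel_right_right add_0)
  ultimately show ?thesis
    by unfold_locales auto
qed

lemma (in comm_ring_hom) comm_ring_hom_eval_poly: "comm_ring_hom (\<lambda>p. eval_poly hom p a)"
proof -
  interpret m: map_poly_comm_ring_hom hom ..
  show ?thesis
    by unfold_locales (simp_all add: eval_poly_def m.hom_add m.hom_mult)
qed

text \<open>A bivariate polynomial Q(x, y) is a polynomial in y with coefficients in F[x];
  \<open>eval_coeffs h a Q\<close> is Q(a, y), the coefficients being mapped by h and evaluated at a.\<close>

definition eval_coeffs :: "('a::zero \<Rightarrow> 'b::comm_semiring_1) \<Rightarrow> 'b \<Rightarrow> 'a poly poly \<Rightarrow> 'b poly" where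
  "eval_coeffs h a Q = map_poly (\<lambda>p. eval_poly h p a) Q"

lemma (in comm_ring_hom) comm_ring_hom_eval_coeffs: "comm_ring_hom (eval_coeffs hom a)"
proof -
  interpret e: comm_ring_hom "\<lambda>p. eval_poly hom p a"
    by (rule comm_ring_hom_eval_poly)
  interpret m: map_poly_comm_ring_hom "\<lambda>p. eval_poly hom p a" ..
  show ?thesis
    unfolding eval_coeffs_def by unfold_locales
qed

lemma poly_over_range_imp_map_poly:
  assumes "f 0 = 0" "poly_over (range f) p"
  shows "\<exists>P. map_poly f P = p"
  using assms(2)
proof (induction p)
  case 0
  show ?case by (auto intro: exI[of _ 0])
next
  case (pCons a p)
  have "poly_over (range f) p" "a \<in> range f"
    using pCons.prems unfolding poly_over_def by (metis coeff_pCons_Suc, metis coeff_pCons_0)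
  then obtain P b where "map_poly f P = p" "f b = a"
    using pCons.IH by blast
  then show ?case
    by (intro exI[of _ "pCons b P"]) (simp add: Polynomial.map_poly_pCons[of f, OF assms(1)])
qed

context field_hom
begin

lemma CHAR_eq: "CHAR('b) = CHAR('a)"
proof (rule CHAR_eqI)
  show "of_nat CHAR('a) = (0::'b)"
    by (metis hom_of_nat hom_zero of_nat_CHAR)
  show "CHAR('a) dvd n" if "of_nat n = (0::'b)" for n
    using that by (metis hom_of_nat hom_0_iff of_nat_eq_0_iff_char_dvd)
qed

lemma is_qs_poly_map_poly_iff: "is_qs_poly q s (map_poly hom P) \<longleftrightarrow> is_qs_poly q s P"
  by (simp add: is_qs_poly_def coeff_map_poly)

lemma dvd_if_common_root:
  assumes "irreducible g" "eval_poly hom g a = 0" "eval_poly hom h a = 0"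
  shows "g dvd h"
proof (rule ccontr)
  interpret e: comm_ring_hom "\<lambda>p. eval_poly hom p a"
    by (rule comm_ring_hom_eval_poly)
  assume "\<not> g dvd h"
  then obtain s t where st: "s * g + t * h = 1"
    using bezout_one_irreducible assms(1) by blast
  show False
    using arg_cong[OF st, of "\<lambda>p. eval_poly hom p a"] assms(2,3) by (simp add: e.hom_add e.hom_mult)
qed

lemma is_subfield_eval_range:
  assumes "irreducible g" "eval_poly hom g b = 0"
  shows "is_subfield (range (\<lambda>p. eval_poly hom p b))"
proof -
  interpret e: comm_ring_hom "\<lambda>p. eval_poly hom p b"
    by (rule comm_ring_hom_eval_poly)
  have inverse: "inverse (eval_poly hom h b) \<in> range (\<lambda>p. eval_poly hom p b)" for h
  proof (cases "eval_poly hom h b = 0")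
    case False
    then have "\<not> g dvd h"
      using assms(2) by (auto elim!: dvdE simp: e.hom_mult)
    then obtain s t where st: "s * g + t * h = 1"
      using bezout_one_irreducible assms(1) by blast
    have "eval_poly hom t b * eval_poly hom h b = 1"
      using arg_cong[OF st, of "\<lambda>p. eval_poly hom p b"] assms(2) by (simp add: e.hom_add e.hom_mult)
    then have "inverse (eval_poly hom h b) = eval_poly hom t b"
      using False by (simp add: field_simps)
    then show ?thesis
      by simp
  next
    case True
    then show ?thesis
      by (metis e.hom_zero inverse_zero rangeI)
  qed
  show ?thesis
    unfolding is_subfield_def
  proof (intro conjI ballI)
    show "0 \<in> range (\<lambda>p. eval_poly hom p b)" "1 \<in> range (\<lambda>p. eval_poly hom p b)"
      by (metis e.hom_zero rangeI, metis e.hom_one rangeI)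
  next
    fix x y assume "x \<in> range (\<lambda>p. eval_poly hom p b)" "y \<in> range (\<lambda>p. eval_poly hom p b)"
    then obtain p p' where "x = eval_poly hom p b" "y = eval_poly hom p' b"
      by blast
    then show "x + y \<in> range (\<lambda>p. eval_poly hom p b)" "x * y \<in> range (\<lambda>p. eval_poly hom p b)"
      "- x \<in> range (\<lambda>p. eval_poly hom p b)" "inverse x \<in> range (\<lambda>p. eval_poly hom p b)"
      using inverse by (metis e.hom_add rangeI, metis e.hom_mult rangeI, metis e.hom_uminus rangeI, simp)
  qed
qed

lemma eval_coeffs_eq_0_transfer:
  assumes g: "irreducible g" "eval_poly hom g a = 0" "eval_poly hom g b = 0"
    and "eval_coeffs hom b Z = 0"
  shows "eval_coeffs hom a Z = 0"
proof -
  interpret e: comm_ring_hom "\<lambda>p. eval_poly hom p a"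
    by (rule comm_ring_hom_eval_poly)
  have "eval_poly hom (coeff Z i) b = 0" for i
    using arg_cong[OF assms(4), of "\<lambda>p. coeff p i"] by (simp add: eval_coeffs_def coeff_map_poly)
  then have dvd: "g dvd coeff Z i" for i
    using dvd_if_common_root g by blast
  have "eval_poly hom (coeff Z i) a = 0" for i
    using dvd[of i] g(2) by (auto elim!: dvdE simp: e.hom_mult)
  then show ?thesis
    by (simp add: eval_coeffs_def poly_eq_iff coeff_map_poly)
qed

text \<open>If Q(b, y) and B(y) had no common root, there would be a Bezout identity with coefficients in
  F(b) = F[b]; lifting it to F[x][y] gives an identity that holds modulo g, hence also at x = a.\<close>

lemma common_root_transfer:
  assumes g: "irreducible g" "eval_poly hom g a = 0" "eval_poly hom g b = 0"
    and split: "map_poly hom B = Polynomial.smult c (prod_list (map (\<lambda>r. [:-r, 1:]) rs))" "B \<noteq> 0"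
    and common_root: "poly (eval_coeffs hom a Q) y = 0" "eval_poly hom B y = 0"
  shows "\<exists>z. poly (eval_coeffs hom b Q) z = 0 \<and> eval_poly hom B z = 0"
proof (rule ccontr)
  assume no_common_root: "\<not> ?thesis"
  define K where "K = range (\<lambda>p. eval_poly hom p b)"
  define QB where "QB = map_poly (\<lambda>c. [:c:]) B"
  interpret ea: comm_ring_hom "eval_coeffs hom a"
    by (rule comm_ring_hom_eval_coeffs)
  interpret eb: comm_ring_hom "eval_coeffs hom b"
    by (rule comm_ring_hom_eval_coeffs)
  have QB: "eval_coeffs hom x QB = map_poly hom B" for x
    unfolding eval_coeffs_def QB_def
    by (subst map_poly_map_poly) (auto simp: o_def eval_poly_def Polynomial.map_poly_pCons)
  have over: "poly_over K (eval_coeffs hom b P)" for P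
    by (auto simp: poly_over_def eval_coeffs_def K_def coeff_map_poly)
  have "\<And>z. poly (eval_coeffs hom b Q) z = 0 \<Longrightarrow> poly (map_poly hom B) z \<noteq> 0"
    using no_common_root by (auto simp: eval_poly_def)
  moreover have "map_poly hom B \<noteq> 0"
    using split(2) by simp
  ultimately obtain S T where ST: "poly_over K S" "poly_over K T"
    "S * eval_coeffs hom b Q + T * map_poly hom B = 1"
    using bezout_one_over_subfield[OF is_subfield_eval_range[OF g(1,3)] _ _ split(1)]
      over[of Q] over[of QB] unfolding K_def QB by blast
  obtain S0 T0 where "eval_coeffs hom b S0 = S" "eval_coeffs hom b T0 = T"
    using poly_over_range_imp_map_poly[of "\<lambda>p. eval_poly hom p b"] ST(1,2)
    unfolding K_def eval_coeffs_def by (metis eval_poly_0)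
  then have "eval_coeffs hom b (S0 * Q + T0 * QB - 1) = 0"
    using ST(3) by (simp add: QB eb.hom_add eb.hom_mult eb.hom_minus)
  then have "eval_coeffs hom a (S0 * Q + T0 * QB - 1) = 0"
    by (rule eval_coeffs_eq_0_transfer[OF g])
  then have "eval_coeffs hom a S0 * eval_coeffs hom a Q + eval_coeffs hom a T0 * map_poly hom B = 1"
    by (simp add: QB ea.hom_add ea.hom_mult ea.hom_minus)
  from arg_cong[OF this, of "\<lambda>p. poly p y"] show False
    using common_root by (simp add: eval_poly_def)
qed

end

section \<open>Homogenization and annihilators\<close>

text \<open>\<open>homogenize n f\<close> is x^n f(y/x), stored as a polynomial in y over F[x].\<close>

definition homogenize :: "nat \<Rightarrow> 'a::comm_monoid_add poly \<Rightarrow> 'a poly poly" where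
  "homogenize n f = (\<Sum>i\<le>n. monom (monom (coeff f i) (n - i)) i)"

lemma (in comm_ring_hom) poly_eval_coeffs_homogenize:
  "poly (eval_coeffs hom a (homogenize n f)) y = (\<Sum>i\<le>n. hom (coeff f i) * a ^ (n - i) * y ^ i)"
proof -
  interpret e: comm_ring_hom "\<lambda>p. eval_poly hom p a"
    by (rule comm_ring_hom_eval_poly)
  interpret m: map_poly_comm_ring_hom "\<lambda>p. eval_poly hom p a" ..
  show ?thesis
    by (simp add: homogenize_def eval_coeffs_def m.hom_sum poly_sum poly_monom eval_poly_monom
        map_poly_monom mult_ac)
qed

context field_hom
begin

lemma poly_eval_coeffs_homogenize_div:
  assumes "degree f \<le> n" "a \<noteq> 0"
  shows "poly (eval_coeffs hom a (homogenize n f)) y = a ^ n * eval_poly hom f (y / a)"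
proof -
  have "eval_poly hom f (y / a) = eval_poly hom (\<Sum>i\<le>n. monom (coeff f i) i) (y / a)"
    by (simp only: poly_as_sum_of_monoms'[OF assms(1)])
  also have "\<dots> = (\<Sum>i\<le>n. hom (coeff f i) * (y / a) ^ i)"
    by (simp add: eval_poly_sum eval_poly_monom)
  finally have eval: "eval_poly hom f (y / a) = (\<Sum>i\<le>n. hom (coeff f i) * (y / a) ^ i)" .
  show ?thesis
    unfolding poly_eval_coeffs_homogenize eval sum_distrib_left
    using assms(2) by (intro sum.cong) (auto simp: power_divide power_diff field_simps)
qed

lemma conjugate_ratio_root:
  assumes g: "irreducible g" "eval_poly hom g \<alpha> = 0" "eval_poly hom g u = 0"
    and "\<alpha> \<noteq> 0" "u \<noteq> 0"
    and split: "map_poly hom B = Polynomial.smult c (prod_list (map (\<lambda>r. [:-r, 1:]) rs))" "B \<noteq> 0"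
    and "eval_poly hom B \<beta> = 0" "eval_poly hom f (\<beta> / \<alpha>) = 0"
  shows "\<exists>r. eval_poly hom f r = 0 \<and> eval_poly hom B (r * u) = 0"
proof -
  define Q where "Q = homogenize (degree f) f"
  have "poly (eval_coeffs hom \<alpha> Q) \<beta> = 0"
    using assms by (simp add: Q_def poly_eval_coeffs_homogenize_div)
  then obtain z where z: "poly (eval_coeffs hom u Q) z = 0" "eval_poly hom B z = 0"
    using common_root_transfer[OF g split] assms(8) by blast
  then have "u ^ degree f * eval_poly hom f (z / u) = 0"
    using \<open>u \<noteq> 0\<close> by (simp add: Q_def poly_eval_coeffs_homogenize_div)
  then show ?thesis
    using z(2) \<open>u \<noteq> 0\<close> by (intro exI[of _ "z / u"]) simp
qed

lemma homogeneous_relation_annihilator: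
  assumes "\<alpha> \<noteq> 0" "\<exists>i\<le>d. c i \<noteq> 0" "(\<Sum>i\<le>d. hom (c i) * \<alpha> ^ (d - i) * \<beta> ^ i) = 0"
  obtains f where "f \<noteq> 0" "degree f \<le> d" "eval_poly hom f (\<beta> / \<alpha>) = 0"
proof
  define f where "f = (\<Sum>i\<le>d. monom (c i) i)"
  have coeff_f: "coeff f i = (if i \<le> d then c i else 0)" for i
    by (simp add: f_def coeff_sum coeff_monom)
  show "f \<noteq> 0" "degree f \<le> d"
    using assms(2) coeff_f by (auto intro: degree_le simp: poly_eq_iff)
  have "poly (eval_coeffs hom \<alpha> (homogenize d f)) \<beta> = 0"
    using assms(3) by (simp add: poly_eval_coeffs_homogenize coeff_f)
  then show "eval_poly hom f (\<beta> / \<alpha>) = 0"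
    using assms(1) \<open>degree f \<le> d\<close> by (simp add: poly_eval_coeffs_homogenize_div)
qed

lemma annihilator_without_other_roots:
  assumes "f0 \<noteq> 0" "eval_poly hom f0 \<gamma> = 0"
  obtains f where "f \<noteq> 0" "degree f \<le> degree f0" "eval_poly hom f \<gamma> = 0"
    "\<And>c. poly f c = 0 \<Longrightarrow> hom c = \<gamma>"
proof -
  have "\<exists>f. (f \<noteq> 0 \<and> eval_poly hom f \<gamma> = 0) \<and>
      (\<forall>h. h \<noteq> 0 \<and> eval_poly hom h \<gamma> = 0 \<longrightarrow> degree f \<le> degree h)"
    using assms by (intro ex_has_least_nat[where k = f0]) simp
  then obtain f where f: "f \<noteq> 0" "eval_poly hom f \<gamma> = 0"
    and min: "\<forall>h. h \<noteq> 0 \<and> eval_poly hom h \<gamma> = 0 \<longrightarrow> degree f \<le> degree h"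
    by blast
  interpret e: comm_ring_hom "\<lambda>p. eval_poly hom p \<gamma>"
    by (rule comm_ring_hom_eval_poly)
  have "hom c = \<gamma>" if "poly f c = 0" for c
  proof (rule ccontr)
    assume "hom c \<noteq> \<gamma>"
    have "[:-c, 1:] dvd f"
      using that poly_eq_0_iff_dvd by blast
    then obtain f1 where f1: "f = [:-c, 1:] * f1"
      by (rule dvdE)
    have "eval_poly hom f \<gamma> = (\<gamma> - hom c) * eval_poly hom f1 \<gamma>"
      unfolding f1 e.hom_mult by (simp add: eval_poly_def hom_uminus)
    then have "eval_poly hom f1 \<gamma> = 0"
      using f(2) \<open>hom c \<noteq> \<gamma>\<close> by simp
    moreover have "f1 \<noteq> 0"
      using f(1) f1 by auto
    ultimately have "degree f \<le> degree f1"
      using min by blast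
    moreover have "degree f = degree [:-c, 1:] + degree f1"
      unfolding f1 by (rule degree_mult_eq) (use \<open>f1 \<noteq> 0\<close> in auto)
    ultimately show False
      by simp
  qed
  moreover have "degree f \<le> degree f0"
    using min assms by blast
  ultimately show ?thesis
    using that f by blast
qed

lemma fixed_points_image:
  assumes "card {x::'a. x ^ q = x} = q" "1 < q"
  shows "{y. y ^ q = y} = hom ` {x. x ^ q = x}"
proof -
  define X :: "'b poly" where "X = monom 1 q - [:0, 1:]"
  have "coeff [:0, 1:] q = (0::'b)"
    using assms(2) by (intro coeff_eq_0) simp
  then have "coeff X q = 1"
    by (simp add: X_def)
  then have "X \<noteq> 0"
    by auto
  have "degree X \<le> q"
    unfolding X_def using assms(2) by (intro degree_diff_le) (auto simp: degree_monom_eq)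
  have roots: "{y. y ^ q = y} = {y. poly X y = 0}"
    by (simp add: X_def poly_monom)
  have "finite {y::'b. y ^ q = y}"
    unfolding roots by (rule poly_roots_finite[OF \<open>X \<noteq> 0\<close>])
  moreover have "card {y::'b. y ^ q = y} \<le> q"
    unfolding roots using card_poly_roots_bound[OF \<open>X \<noteq> 0\<close>] \<open>degree X \<le> q\<close> by linarith
  moreover have "hom ` {x. x ^ q = x} \<subseteq> {y. y ^ q = y}"
    by (auto simp del: hom_power simp add: hom_power[symmetric])
  moreover have "card (hom ` {x. x ^ q = x}) = q"
    using assms(1) by (simp add: card_image inj_on_def)
  ultimately show ?thesis
    using card_mono card_subset_eq by (metis order_antisym)
qed

lemma annihilator_without_fixed_roots:
  assumes "card {x::'a. x ^ q = x} = q" "1 < q" "\<gamma> ^ q \<noteq> \<gamma>"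
    and "f0 \<noteq> 0" "eval_poly hom f0 \<gamma> = 0"
  obtains f where "f \<noteq> 0" "degree f \<le> degree f0" "eval_poly hom f \<gamma> = 0"
    "\<And>r. eval_poly hom f r = 0 \<Longrightarrow> r ^ q \<noteq> r"
proof -
  obtain f where f: "f \<noteq> 0" "degree f \<le> degree f0" "eval_poly hom f \<gamma> = 0"
    and other_roots: "\<And>c. poly f c = 0 \<Longrightarrow> hom c = \<gamma>"
    using annihilator_without_other_roots[OF assms(4,5)] by blast
  have "r ^ q \<noteq> r" if "eval_poly hom f r = 0" for r
  proof
    assume "r ^ q = r"
    then obtain x where "r = hom x"
      using fixed_points_image[OF assms(1,2)] by blast
    then show False
      using that other_roots assms(3) \<open>r ^ q = r\<close> by (auto simp: eval_poly_poly)
  qed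
  with f show ?thesis
    using that by blast
qed

lemma ratio_annihilator_without_fixed_roots:
  assumes "card {x::'a. x ^ q = x} = q" "1 < q" "\<alpha> \<noteq> 0" "(\<beta> / \<alpha>) ^ q \<noteq> \<beta> / \<alpha>"
    and "\<exists>c. (\<exists>i\<le>d. c i \<noteq> 0) \<and> (\<Sum>i\<le>d. hom (c i) * \<alpha> ^ (d - i) * \<beta> ^ i) = 0"
  obtains f where "f \<noteq> 0" "degree f \<le> d" "eval_poly hom f (\<beta> / \<alpha>) = 0"
    "\<And>r. eval_poly hom f r = 0 \<Longrightarrow> r ^ q \<noteq> r"
proof -
  obtain c where "\<exists>i\<le>d. c i \<noteq> 0" "(\<Sum>i\<le>d. hom (c i) * \<alpha> ^ (d - i) * \<beta> ^ i) = 0"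
    using assms(5) by blast
  then obtain f0 where f0: "f0 \<noteq> 0" "degree f0 \<le> d" "eval_poly hom f0 (\<beta> / \<alpha>) = 0"
    by (rule homogeneous_relation_annihilator[OF assms(3)])
  obtain f where "f \<noteq> 0" "degree f \<le> degree f0" "eval_poly hom f (\<beta> / \<alpha>) = 0"
    "\<And>r. eval_poly hom f r = 0 \<Longrightarrow> r ^ q \<noteq> r"
    using annihilator_without_fixed_roots[OF assms(1,2,4) f0(1,3)] by blast
  with f0(2) show ?thesis
    using that order_trans by blast
qed

end

section \<open>Linearized polynomials\<close>

lemma is_q_poly_iff_is_qs_poly_1: "is_q_poly q P \<longleftrightarrow> is_qs_poly q 1 P"
  by (simp add: is_q_poly_def is_qs_poly_def)

lemma coeff_0_q_poly: "is_q_poly q P \<Longrightarrow> 0 < q \<Longrightarrow> coeff P 0 = 0"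
  unfolding is_q_poly_def by (metis power_not_zero not_gr0)

lemma pderiv_q_poly:
  fixes P :: "'a::field poly"
  assumes "is_q_poly q P" "of_nat q = (0::'a)"
  shows "pderiv P = [:coeff P 1:]"
proof (rule poly_eqI)
  fix j
  have "of_nat (Suc j) * coeff P (Suc j) = (0::'a)" if "0 < j"
  proof (cases "coeff P (Suc j) = 0")
    case False
    then obtain i where i: "Suc j = q ^ i"
      using assms(1) by (auto simp: is_q_poly_def)
    with \<open>0 < j\<close> have "0 < i"
      by (cases i) auto
    then have "of_nat (Suc j) = (0::'a)"
      unfolding i using assms(2) by (simp add: of_nat_power)
    then show ?thesis
      by simp
  qed simp
  then show "coeff (pderiv P) j = coeff [:coeff P 1:] j"
    by (cases j) (auto simp: coeff_pderiv)
qed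

lemma poly_prod_linear_eq_0_iff:
  "poly (prod_list (map (\<lambda>r. [:-r, 1:]) rs)) x = 0 \<longleftrightarrow> x \<in> set (rs :: 'a::idom list)"
  by (induction rs) auto

lemma card_roots_split_separable:
  fixes P :: "'a::idom poly"
  assumes split: "P = Polynomial.smult c (prod_list (map (\<lambda>r. [:-r, 1:]) rs))"
    and separable: "\<And>x. poly (pderiv P) x \<noteq> 0"
  shows "card {x. poly P x = 0} = degree P"
proof -
  have "c \<noteq> 0"
    using separable split by fastforce
  have "distinct rs"
  proof (rule ccontr)
    assume "\<not> distinct rs"
    then obtain xs y ys zs where rs: "rs = xs @ [y] @ ys @ [y] @ zs"
      using not_distinct_decomp by blast
    define lin :: "'a \<Rightarrow> 'a poly" where "lin r = [:-r, 1:]" for r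
    define H where "H = Polynomial.smult c (prod_list (map lin (xs @ ys @ zs)))"
    have "P = lin y * (lin y * H)"
      unfolding split H_def lin_def[symmetric] rs by (simp add: mult_ac)
    then have "pderiv P = lin y * (pderiv (lin y * H) + H * pderiv (lin y))"
      by (simp add: pderiv_mult algebra_simps)
    then show False
      using separable[of y] by (simp add: lin_def)
  qed
  have roots: "{x. poly P x = 0} = set rs"
    unfolding split poly_smult using \<open>c \<noteq> 0\<close>
    by (simp only: mult_eq_0_iff poly_prod_linear_eq_0_iff) simp
  have "degree P \<le> length rs"
    using degree_prod_list_le[of "map (\<lambda>r. [:-r, 1:]) rs"] by (simp add: split o_def sum_list_triv)
  moreover have "P \<noteq> 0"
    using separable by fastforce
  then have "length rs \<le> degree P"
    using card_poly_roots_bound[of P] \<open>distinct rs\<close> by (simp add: roots distinct_card)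
  ultimately show ?thesis
    using \<open>distinct rs\<close> by (simp add: roots distinct_card)
qed

lemma card_roots_q_poly:
  fixes P :: "'a::field poly"
  assumes "is_q_poly q P" "of_nat q = (0::'a)" "coeff P 1 \<noteq> 0"
    and "P = Polynomial.smult c (prod_list (map (\<lambda>r. [:-r, 1:]) rs))"
  shows "card {x. poly P x = 0} = degree P"
  using assms by (intro card_roots_split_separable) (simp_all add: pderiv_q_poly)

lemma x_times_div_x:
  fixes L :: "'a::field poly"
  assumes "coeff L 0 = 0"
  shows "[:0, 1:] * (L div [:0, 1:]) = L"
  by (rule dvd_mult_div_cancel) (use assms dvd_iff_poly_eq_0[of 0 L] in \<open>simp add: poly_0_coeff_0\<close>)

lemma coeff_1_neq_0_if_irreducible_div_x:
  fixes L :: "'a::field poly"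
  assumes irr: "irreducible (L div [:0, 1:])" and "coeff L 0 = 0"
    and "coeff L j \<noteq> 0" "0 < j" "j < degree L"
  shows "coeff L 1 \<noteq> 0"
proof
  assume "coeff L 1 = 0"
  define g where "g = L div [:0, 1:]"
  have L: "L = [:0, 1:] * g"
    unfolding g_def by (rule x_times_div_x[OF \<open>coeff L 0 = 0\<close>, symmetric])
  then have "coeff g 0 = 0"
    using \<open>coeff L 1 = 0\<close> by simp
  then obtain h where h: "g = [:0, 1:] * h"
    by (metis dvdE poly_0_coeff_0 poly_eq_0_iff_dvd minus_zero)
  have "\<not> is_unit [:0, 1::'a:]"
    by (simp add: is_unit_poly_iff)
  then have "is_unit h"
    using irreducibleD[OF irr[folded g_def] h] by blast
  then obtain a where "h = [:a:]" "a \<noteq> 0"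
    by (metis is_unit_poly_iff one_dvd dvd_0_left_iff zero_neq_one)
  then have "coeff L i \<noteq> 0 \<longleftrightarrow> i = 2" "degree L = 2" for i
    by (simp_all add: L h coeff_pCons numeral_2_eq_2 split: nat.split)
  then show False
    using assms(3,5) by simp
qed

lemma (in field_hom) eval_poly_div_x_eq_0:
  assumes "coeff L 0 = 0" "eval_poly hom L u = 0" "u \<noteq> 0"
  shows "eval_poly hom (L div [:0, 1:]) u = 0"
proof -
  interpret e: comm_ring_hom "\<lambda>p. eval_poly hom p u"
    by (rule comm_ring_hom_eval_poly)
  have "eval_poly hom L u = eval_poly hom [:0, 1:] u * eval_poly hom (L div [:0, 1:]) u"
    unfolding e.hom_mult[symmetric] x_times_div_x[OF assms(1)] ..
  then show ?thesis
    using assms(2,3) by (simp add: eval_poly_def)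
qed

lemma q_power_fixed_period:
  fixes r :: "'a::monoid_mult"
  assumes "r ^ q ^ n = r" "0 < n" "r ^ q \<noteq> r"
  obtains s where "1 < s" "\<And>i. r ^ q ^ i = r \<Longrightarrow> s dvd i"
proof -
  have iterate: "r ^ q ^ (i + j) = (r ^ q ^ i) ^ q ^ j" for i j
    by (simp add: power_add power_mult)
  define s where "s = (LEAST s. 0 < s \<and> r ^ q ^ s = r)"
  have s: "0 < s" "r ^ q ^ s = r"
    using LeastI[of "\<lambda>s. 0 < s \<and> r ^ q ^ s = r" n] assms(1,2) by (auto simp: s_def)
  have multiple: "r ^ q ^ (s * t) = r" for t
    by (induction t) (simp_all add: iterate s(2))
  have "s dvd i" if "r ^ q ^ i = r" for i
  proof (rule ccontr)
    assume "\<not> s dvd i"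
    then have "0 < i mod s"
      by (simp add: dvd_eq_mod_eq_0)
    moreover have "r ^ q ^ (i mod s) = r"
      using that iterate[of "s * (i div s)" "i mod s"] multiple by simp
    ultimately have "s \<le> i mod s"
      unfolding s_def by (intro Least_le) simp
    then show False
      using mod_less_divisor[OF s(1), of i] by linarith
  qed
  moreover have "1 < s"
    using s assms(3) by (cases "s = 1") auto
  ultimately show ?thesis
    using that by blast
qed

lemma q_poly_scaling_invariant_imp_qs_poly:
  fixes P :: "'a::field poly"
  assumes "is_q_poly q P" "0 < n" "coeff P 1 \<noteq> 0" "r ^ q \<noteq> r"
    and invariant: "P \<circ>\<^sub>p [:0, r:] = Polynomial.smult (r ^ q ^ n) P"
  shows "\<exists>s>1. is_qs_poly q s P"
proof -
  have fixed: "r ^ j = r ^ q ^ n" if "coeff P j \<noteq> 0" for j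
    using arg_cong[OF invariant, of "\<lambda>p. coeff p j"] that by (simp add: coeff_pcompose_linear)
  then have "r ^ q ^ n = r"
    using assms(3) fixed[of 1] by simp
  then obtain s where s: "1 < s" "\<And>i. r ^ q ^ i = r \<Longrightarrow> s dvd i"
    using q_power_fixed_period assms(2,4) by blast
  have "is_qs_poly q s P"
    unfolding is_qs_poly_def
  proof (intro allI impI)
    fix j
    assume "coeff P j \<noteq> 0"
    moreover from this obtain i where "j = q ^ i"
      using assms(1) by (auto simp: is_q_poly_def)
    ultimately show "\<exists>i. s dvd i \<and> j = q ^ i"
      using fixed \<open>r ^ q ^ n = r\<close> s(2) by metis
  qed
  with s(1) show ?thesis
    by blast
qed

lemma card_scaled_common_roots_less:
  fixes P :: "'a::field poly"
  assumes "is_q_poly q P" "degree P = q ^ n" "m < n" "1 < q" "coeff P 1 \<noteq> 0"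
    and gap: "\<And>i. m < i \<Longrightarrow> i < n \<Longrightarrow> coeff P (q ^ i) = 0"
    and "\<not> (\<exists>s>1. is_qs_poly q s P)" "r ^ q \<noteq> r"
  shows "card {u. u \<noteq> 0 \<and> poly P u = 0 \<and> poly P (r * u) = 0} < q ^ m"
proof -
  define M where "M = P \<circ>\<^sub>p [:0, r:] - Polynomial.smult (r ^ q ^ n) P"
  have coeff_M: "coeff M j = (r ^ j - r ^ q ^ n) * coeff P j" for j
    by (simp add: M_def coeff_pcompose_linear algebra_simps)
  have "M \<noteq> 0"
    using q_poly_scaling_invariant_imp_qs_poly[of q P n r] assms by (auto simp: M_def)
  have "degree M \<le> q ^ m"
  proof (rule degree_le, intro allI impI)
    fix j
    assume "q ^ m < j"
    show "coeff M j = 0"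
    proof (cases "coeff P j = 0 \<or> j = q ^ n")
      case False
      then obtain i where i: "j = q ^ i"
        using assms(1) by (auto simp: is_q_poly_def)
      have "j < q ^ n"
        using False le_degree[of P j] assms(2) by fastforce
      then have "m < i" "i < n"
        using \<open>q ^ m < j\<close> assms(4) by (simp_all add: i)
      then show ?thesis
        using gap i False by blast
    qed (auto simp: coeff_M)
  qed
  define W where "W = {u. u \<noteq> 0 \<and> poly P u = 0 \<and> poly P (r * u) = 0}"
  have "poly P 0 = 0"
    using coeff_0_q_poly[OF assms(1)] assms(4) by (simp add: poly_0_coeff_0)
  then have roots: "insert 0 W \<subseteq> {x. poly M x = 0}"
    by (auto simp: W_def M_def poly_pcompose ac_simps)
  then have "card (insert 0 W) \<le> q ^ m"
    using card_mono[OF poly_roots_finite[OF \<open>M \<noteq> 0\<close>]] card_poly_roots_bound[OF \<open>M \<noteq> 0\<close>]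
      \<open>degree M \<le> q ^ m\<close> by (meson le_trans)
  moreover have "finite W"
    using finite_subset[OF roots poly_roots_finite[OF \<open>M \<noteq> 0\<close>]] by simp
  ultimately show ?thesis
    by (simp add: W_def)
qed

lemma card_nonzero_roots_le_by_scalings:
  fixes P F :: "'a::field poly"
  assumes "is_q_poly q P" "degree P = q ^ n" "m < n" "1 < q" "coeff P 1 \<noteq> 0"
    and "\<And>i. m < i \<Longrightarrow> i < n \<Longrightarrow> coeff P (q ^ i) = 0"
    and "\<not> (\<exists>s>1. is_qs_poly q s P)"
    and "F \<noteq> 0" "\<And>r. poly F r = 0 \<Longrightarrow> r ^ q \<noteq> r"
    and cover: "\<And>u. poly P u = 0 \<Longrightarrow> u \<noteq> 0 \<Longrightarrow> \<exists>r. poly F r = 0 \<and> poly P (r * u) = 0"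
  shows "card {u. poly P u = 0} - 1 \<le> degree F * (q ^ m - 1)"
proof -
  define R where "R = {r. poly F r = 0}"
  define W where "W r = {u. u \<noteq> 0 \<and> poly P u = 0 \<and> poly P (r * u) = 0}" for r
  have "P \<noteq> 0"
    using assms(2,4) by auto
  have "finite R"
    unfolding R_def by (rule poly_roots_finite[OF \<open>F \<noteq> 0\<close>])
  have "{u. poly P u = 0} - {0} \<subseteq> (\<Union>r\<in>R. W r)"
    using cover by (auto simp: R_def W_def)
  then have "card ({u. poly P u = 0} - {0}) \<le> card (\<Union>r\<in>R. W r)"
    using \<open>finite R\<close> poly_roots_finite[OF \<open>P \<noteq> 0\<close>] by (intro card_mono) (auto simp: W_def)
  also have "\<dots> \<le> (\<Sum>r\<in>R. card (W r))"
    by (rule card_UN_le[OF \<open>finite R\<close>])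
  also have "\<dots> \<le> (\<Sum>r\<in>R. q ^ m - 1)"
  proof (rule sum_mono)
    fix r
    assume "r \<in> R"
    have "card (W r) < q ^ m"
      unfolding W_def by (rule card_scaled_common_roots_less) (use assms \<open>r \<in> R\<close> R_def in auto)
    then show "card (W r) \<le> q ^ m - 1"
      by simp
  qed
  also have "\<dots> \<le> degree F * (q ^ m - 1)"
    using card_poly_roots_bound[OF \<open>F \<noteq> 0\<close>] by (simp add: R_def)
  finally show ?thesis
    using coeff_0_q_poly[OF assms(1)] assms(4) by (simp add: poly_0_coeff_0)
qed

section \<open>The degree bound\<close>

lemma char_prime_power:
  assumes "prime CHAR('a::comm_ring_1)" "\<exists>m\<ge>1. q = CHAR('a) ^ m"
  shows "1 < q" "of_nat q = (0::'a)" "(-1::'a) ^ q = -1"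
proof -
  obtain m where "q = CHAR('a) ^ m" "0 < m"
    using assms(2) by auto
  with assms(1) show "1 < q"
    using assms prime_gt_1_nat one_less_power by blast
  show "of_nat q = (0::'a)"
    using \<open>q = CHAR('a) ^ m\<close> \<open>0 < m\<close> by (simp add: of_nat_power power_0_left)
  show "(-1::'a) ^ q = -1"
  proof (cases "CHAR('a) = 2")
    case True
    then have "(1::'a) = -1"
      using of_nat_CHAR[where 'a='a] by (simp add: eq_neg_iff_add_eq_0)
    then show ?thesis
      by (metis power_one)
  next
    case False
    then have "odd q"
      using assms(1) \<open>q = CHAR('a) ^ m\<close> \<open>0 < m\<close> prime_odd_nat prime_ge_2_nat
      by (simp add: le_neq_implies_less)
    then show ?thesis
      by simp
  qed
qed

lemma ratio_not_fixed_if_independent: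
  fixes \<alpha> \<beta> :: "'a::field"
  assumes indep: "\<forall>a b. a ^ q = a \<and> b ^ q = b \<and> a * \<alpha> + b * \<beta> = 0 \<longrightarrow> a = 0 \<and> b = 0"
    and "(-1::'a) ^ q = -1" "0 < q"
  shows "\<alpha> \<noteq> 0" "(\<beta> / \<alpha>) ^ q \<noteq> \<beta> / \<alpha>"
proof -
  show "\<alpha> \<noteq> 0"
    using indep[rule_format, of 1 0] assms(3) by auto
  then show "(\<beta> / \<alpha>) ^ q \<noteq> \<beta> / \<alpha>"
    using indep[rule_format, of "\<beta> / \<alpha>" "-1"] assms(2) by auto
qed

lemma power_bound_from_fibre_count:
  fixes q n k d :: nat
  assumes "q ^ n - 1 \<le> d * (q ^ (n - k) - 1)" "1 < q" "1 \<le> k" "k \<le> n"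
  shows "q ^ k + 1 \<le> d"
proof (rule ccontr)
  assume "\<not> q ^ k + 1 \<le> d"
  then have "d * (q ^ (n - k) - 1) \<le> q ^ k * (q ^ (n - k) - 1)"
    by (intro mult_le_mono1) simp
  also have "\<dots> = q ^ n - q ^ k"
    using assms(4) by (simp add: right_diff_distrib' flip: power_add)
  finally have "q ^ n - 1 \<le> q ^ n - q ^ k"
    using assms(1) by linarith
  moreover have "q ^ 1 \<le> q ^ k" "q ^ k \<le> q ^ n"
    using assms(2-4) by (intro power_increasing; simp)+
  ultimately show False
    using assms(2) by (simp add: le_diff_iff')
qed

theorem theorem7p9:
  fixes p q n k d :: nat
    and L :: "'f::field poly"
    and \<phi> :: "'f \<Rightarrow> 'e::field"
    and \<alpha> \<beta> :: 'e
  assumes "prime p"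
    and "\<exists>m\<ge>1. q = p ^ m"
    and "CHAR('f) = p"
    and "card {x::'f. x ^ q = x} = q"
    and "is_q_poly q L" and "lead_coeff L = 1" and "degree L = q ^ n"
    and "irreducible (L div [:0, 1:])"
    and "\<not> (\<exists>s>1. is_qs_poly q s L)"
    and "1 \<le> k" and "k \<le> n"
    and "coeff L (q ^ (n - k)) \<noteq> 0"
    and "\<forall>i. n - k < i \<and> i < n \<longrightarrow> coeff L (q ^ i) = 0"
    and "is_splitting_field \<phi> L"
    and "poly (map_poly \<phi> L) \<alpha> = 0" and "poly (map_poly \<phi> L) \<beta> = 0"
    and "\<forall>a b::'e. a ^ q = a \<and> b ^ q = b \<and> a * \<alpha> + b * \<beta> = 0 \<longrightarrow> a = 0 \<and> b = 0"
    and "0 < d"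
    and "\<exists>c::nat \<Rightarrow> 'f. (\<exists>i\<le>d. c i \<noteq> 0) \<and>
           (\<Sum>i\<le>d. \<phi> (c i) * \<alpha> ^ (d - i) * \<beta> ^ i) = 0"
  shows "d \<ge> q ^ k + 1"
proof -
  interpret field_hom \<phi>
    using field_hom_if_splitting_field assms(14) .
  have "1 < q" "of_nat q = (0::'e)" "(-1::'e) ^ q = -1"
    using char_prime_power[where 'a='e] assms(1-3) CHAR_eq by auto
  have L: "coeff L 0 = 0" "L \<noteq> 0"
    using coeff_0_q_poly[OF assms(5)] \<open>1 < q\<close> assms(6) by auto
  have "q ^ (n - k) < q ^ n"
    using assms(10,11) \<open>1 < q\<close> by simp
  then have "coeff L 1 \<noteq> 0"
    using coeff_1_neq_0_if_irreducible_div_x[OF assms(8) L(1) assms(12)] assms(7) \<open>1 < q\<close> by simp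
  define P where "P = map_poly \<phi> L"
  then have P: "is_q_poly q P" "degree P = q ^ n" "coeff P 1 \<noteq> 0" "\<not> (\<exists>s>1. is_qs_poly q s P)"
    "\<And>i. n - k < i \<Longrightarrow> i < n \<Longrightarrow> coeff P (q ^ i) = 0" "\<And>x. eval_poly \<phi> L x = poly P x"
    using assms(5,7,9,13) \<open>coeff L 1 \<noteq> 0\<close>
    by (simp_all add: is_q_poly_iff_is_qs_poly_1 is_qs_poly_map_poly_iff coeff_map_poly eval_poly_def)
  obtain c rs where split: "P = Polynomial.smult c (prod_list (map (\<lambda>r. [:-r, 1:]) rs))"
    using assms(14) by (auto simp: is_splitting_field_def P_def)
  have "\<alpha> \<noteq> 0" and "(\<beta> / \<alpha>) ^ q \<noteq> \<beta> / \<alpha>"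
    using ratio_not_fixed_if_independent[OF assms(17) \<open>(-1::'e) ^ q = -1\<close>] \<open>1 < q\<close> by simp_all
  obtain f where f: "f \<noteq> 0" "degree f \<le> d" "eval_poly \<phi> f (\<beta> / \<alpha>) = 0"
    and not_fixed: "\<And>r. eval_poly \<phi> f r = 0 \<Longrightarrow> r ^ q \<noteq> r"
    using ratio_annihilator_without_fixed_roots[OF assms(4) \<open>1 < q\<close> _ _ assms(19)]
      \<open>\<alpha> \<noteq> 0\<close> \<open>(\<beta> / \<alpha>) ^ q \<noteq> \<beta> / \<alpha>\<close> by blast
  have cover: "\<exists>r. eval_poly \<phi> f r = 0 \<and> poly P (r * u) = 0" if "poly P u = 0" "u \<noteq> 0" for u
    using conjugate_ratio_root[OF assms(8) eval_poly_div_x_eq_0 eval_poly_div_x_eq_0 \<open>\<alpha> \<noteq> 0\<close> \<open>u \<noteq> 0\<close>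
        split[unfolded P_def] L(2) _ f(3)] that assms(15,16) L(1) \<open>\<alpha> \<noteq> 0\<close> by (simp add: P(6) P_def)
  have "q ^ n - 1 \<le> degree (map_poly \<phi> f) * (q ^ (n - k) - 1)"
    using card_nonzero_roots_le_by_scalings[OF P(1,2) _ \<open>1 < q\<close> P(3,5,4), where F = "map_poly \<phi> f"]
      card_roots_q_poly[OF P(1) \<open>of_nat q = 0\<close> P(3) split] assms(10,11) f(1) not_fixed cover
    by (simp add: P(2) eval_poly_def)
  then have "q ^ n - 1 \<le> d * (q ^ (n - k) - 1)"
    using f(2) degree_map_poly_le[of \<phi> f] by (meson le_trans mult_le_mono1)
  then show ?thesis
    using power_bound_from_fibre_count \<open>1 < q\<close> assms(10,11) by blast
qed

end
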